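(* Let $d\ge 2$, let $\beta_1,\ldots,\beta_d>-1$, let $k$ be a real exponent, and let $E\subset\mathbb{R}^d$ be an affine hyperplane with $\mathrm{dist}(E,0)=h\in[0,1)$. Then $$\int_{E^d}\big(\mathrm{Vol}_{d-1}(\mathrm{conv}(x_1,\ldots,x_d))\big)^k\prod_{i=1}^d f_{d,\beta_i}(x_i)\prod_{i=1}^d\lambda_E(\mathrm{d}x_i)=\frac{\prod_{i=1}^d c_{d,\beta_i}}{\prod_{i=1}^d c_{d-1,\beta_i}}\,(1-h^2)^{\sum_{i=1}^d\beta_i+\frac{d-1}{2}(k+d)}\,\mathbb{E}\big(\Delta_{d-1}^{(\beta_1,\ldots,\beta_d)}\big)^k,$$ where $\lambda_E$ is the $(d-1)$-dimensional Lebesgue measure on $E$ and $\Delta_{d-1}^{(\beta_1,\ldots,\beta_d)}=\mathrm{Vol}_{d-1}(\mathrm{conv}(Y_1,\ldots,Y_d))$ for independent random vectors $Y_1,\ldots,Y_d$ in $\mathbb{R}^{d-1}$ with $Y_i$ having density $f_{d-1,\beta_i}$.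
   Context: For $m\ge1$ and $\beta>-1$, the beta density on $\mathbb{R}^m$ is $f_{m,\beta}(x)=c_{m,\beta}(1-|x|^2)^{\beta}$ for $|x|\le 1$ (and $0$ otherwise), where $c_{m,\beta}=\frac{\Gamma(\frac m2+\beta+1)}{\pi^{m/2}\Gamma(\beta+1)}$. *)

theory Defs
  imports "HOL-Analysis.Analysis"
begin

definition beta_const :: "nat \<Rightarrow> real \<Rightarrow> real" where
  "beta_const m \<beta> = Gamma (real m / 2 + \<beta> + 1) / (pi powr (real m / 2) * Gamma (\<beta> + 1))"

definition beta_dens :: "nat \<Rightarrow> real \<Rightarrow> 'a::real_normed_vector \<Rightarrow> real" where
  "beta_dens m \<beta> x = (if norm x \<le> 1 then beta_const m \<beta> * (1 - (norm x)\<^sup>2) powr \<beta> else 0)"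

text \<open>An affine isometric embedding of R^(d-1) into R^d; its image is an affine hyperplane
  when the dimensions differ by one.\<close>
definition affine_isometry :: "('a::euclidean_space \<Rightarrow> 'b::euclidean_space) \<Rightarrow> bool" where
  "affine_isometry \<phi> \<longleftrightarrow> (\<exists>p L. linear L \<and> (\<forall>z. norm (L z) = norm z) \<and> \<phi> = (\<lambda>z. p + L z))"

text \<open>(d-1)-dimensional Lebesgue measure lambda_E on the hyperplane E = range phi,
  i.e. the image of Lebesgue measure under the isometric parametrisation phi.\<close>
definition hyperplane_measure :: "('a::euclidean_space \<Rightarrow> 'b::euclidean_space) \<Rightarrow> 'b measure" where
  "hyperplane_measure \<phi> = distr lborel borel \<phi>"

definition hyperplane_vol :: "('a::euclidean_space \<Rightarrow> 'b::euclidean_space) \<Rightarrow> 'b set \<Rightarrow> real" where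
  "hyperplane_vol \<phi> S = measure lborel (\<phi> -` S)"

end

theory Submission
  imports Defs
begin

(* Pythagoras gives
   |phi z|^2 = h^2 + |z + b|^2, phi (-b) being the foot of the perpendicular from 0 to E.
   Hence the substitution x_i = phi (-b + r w_i) with r = sqrt (1 - h^2) maps the unit ball
   of R^(d-1) onto the section of the unit ball by E and turns f_{d,beta_i} (x_i) into
   c_{d,beta_i} / c_{d-1,beta_i} * r^(2 beta_i) * f_{d-1,beta_i} (w_i).  The simplex volume
   scales by r^(d-1), so does each of the d copies of lambda_E, and collecting the powers
   of r^2 = 1 - h^2 gives the exponent. *)

lemma convex_hull_range_eq_image_simplex:
  fixes Y :: "'n::finite \<Rightarrow> 'a::real_vector"
  shows "convex hull (range Y)
       = (\<lambda>u::real^'n. \<Sum>i\<in>UNIV. u$i *\<^sub>R Y i) ` (convex hull (range (\<lambda>i. axis i 1)))"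
proof -
  have "linear (\<lambda>u::real^'n. \<Sum>i\<in>UNIV. u$i *\<^sub>R Y i)"
    by (intro linear_compose_sum) (auto intro!: linearI simp: scaleR_add_left)
  moreover have "range Y = (\<lambda>u::real^'n. \<Sum>i\<in>UNIV. u$i *\<^sub>R Y i) ` range (\<lambda>i. axis i 1)"
    by (auto simp: image_image axis_def if_distrib[of "\<lambda>c. c *\<^sub>R _"] cong: if_cong)
  ultimately show ?thesis
    by (simp add: convex_hull_linear_image)
qed

lemma closed_convex_hull_range_graph:
  "closed {(Y::'a::euclidean_space^'n::finite, y). y \<in> convex hull (range (\<lambda>i. Y$i))}"
proof -
  define K :: "(real^'n) set" where "K = convex hull (range (\<lambda>i. axis i 1))"
  have "compact K"
    unfolding K_def by (intro compact_convex_hull finite_imp_compact) simp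
  moreover have "closed {(u, Y::'a^'n, y). (\<Sum>i\<in>UNIV. u$i *\<^sub>R Y$i) = y}"
  proof -
    have "closed {z::(real^'n) \<times> ('a^'n) \<times> 'a. (\<Sum>i\<in>UNIV. fst z $ i *\<^sub>R fst (snd z) $ i) = snd (snd z)}"
      by (intro closed_Collect_eq continuous_intros)
    then show ?thesis by (simp add: case_prod_beta')
  qed
  ultimately have "closed {z. \<exists>u. u \<in> K \<and> (u, z) \<in> {(u, Y::'a^'n, y). (\<Sum>i\<in>UNIV. u$i *\<^sub>R Y$i) = y}}"
    by (rule closed_compact_projection)
  also have "{z. \<exists>u. u \<in> K \<and> (u, z) \<in> {(u, Y::'a^'n, y). (\<Sum>i\<in>UNIV. u$i *\<^sub>R Y$i) = y}}
      = {(Y, y). y \<in> convex hull (range (\<lambda>i. Y$i))}"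
    by (auto simp: K_def convex_hull_range_eq_image_simplex[of "vec_nth _"])
  finally show ?thesis .
qed

lemma measurable_vec_lambda_PiM[measurable]:
  "(\<lambda>x::'n::finite \<Rightarrow> 'a::euclidean_space. vec_lambda x) \<in> borel_measurable (PiM UNIV (\<lambda>_. borel))"
  by (subst borel_measurable_euclidean_space) (auto simp: Basis_vec_def inner_axis)

lemma borel_measurable_emeasure_vimage_convex_hull:
  fixes \<psi> :: "'b::euclidean_space \<Rightarrow> 'a::euclidean_space"
  assumes [measurable]: "\<psi> \<in> borel_measurable borel"
  shows "(\<lambda>x::'n::finite \<Rightarrow> 'a. emeasure lborel (\<psi> -` (convex hull (range x))))
           \<in> borel_measurable (PiM UNIV (\<lambda>_. borel))"
proof -
  have C: "{(Y::'a^'n, y). y \<in> convex hull (range (\<lambda>i. Y$i))} \<in> sets borel"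
    using closed_convex_hull_range_graph by (rule borel_closed)
  define g where "g = (\<lambda>w::('n \<Rightarrow> 'a) \<times> 'b. (vec_lambda (fst w), \<psi> (snd w)))"
  have "g \<in> PiM UNIV (\<lambda>_. borel) \<Otimes>\<^sub>M lborel \<rightarrow>\<^sub>M borel \<Otimes>\<^sub>M borel"
    unfolding g_def by measurable
  then have g: "g \<in> borel_measurable (PiM UNIV (\<lambda>_. borel) \<Otimes>\<^sub>M lborel)"
    by (simp add: borel_prod)
  define Q where "Q = g -` {(Y, y). y \<in> convex hull (range (\<lambda>i. Y$i))}"
  have "Q \<in> sets (PiM UNIV (\<lambda>_. borel) \<Otimes>\<^sub>M lborel)"
    using measurable_sets[OF g C] by (simp add: Q_def space_pair_measure space_PiM)
  from lborel.measurable_emeasure_Pair[OF this]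
  show ?thesis by (simp add: Q_def g_def vimage_def)
qed

lemma borel_measurable_hyperplane_vol_convex_hull[measurable]:
  fixes \<phi> :: "'b::euclidean_space \<Rightarrow> 'a::euclidean_space"
  assumes "\<phi> \<in> borel_measurable borel"
  shows "(\<lambda>x::'n::finite \<Rightarrow> 'a. hyperplane_vol \<phi> (convex hull (range x)))
           \<in> borel_measurable (PiM UNIV (\<lambda>_. borel))"
  unfolding hyperplane_vol_def measure_def
  using borel_measurable_emeasure_vimage_convex_hull[OF assms] by measurable

lemma borel_measurable_measure_convex_hull[measurable]:
  "(\<lambda>x::'n::finite \<Rightarrow> 'a::euclidean_space. measure lborel (convex hull (range x)))
     \<in> borel_measurable (PiM UNIV (\<lambda>_. borel))"
  using borel_measurable_hyperplane_vol_convex_hull[of id]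
  by (simp add: hyperplane_vol_def)

lemma measurable_PiM_UNIV_map:
  assumes [measurable]: "T \<in> M \<rightarrow>\<^sub>M N"
  shows "(\<lambda>x i. T (x i)) \<in> PiM (UNIV::'i::finite set) (\<lambda>_. M) \<rightarrow>\<^sub>M PiM UNIV (\<lambda>_. N)"
  by (rule measurable_PiM_single') (auto simp: space_PiM intro: measurable_space[OF assms])

lemma PiM_UNIV_distr:
  assumes "sigma_finite_measure M" "sigma_finite_measure (distr M N T)"
    and T[measurable]: "T \<in> M \<rightarrow>\<^sub>M N"
  shows "PiM (UNIV::'i::finite set) (\<lambda>_. distr M N T)
       = distr (PiM UNIV (\<lambda>_. M)) (PiM UNIV (\<lambda>_. N)) (\<lambda>x i. T (x i))"
proof -
  interpret D: product_sigma_finite "\<lambda>_::'i. distr M N T"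
    using assms(2) by (simp add: product_sigma_finite_def)
  interpret M: product_sigma_finite "\<lambda>_::'i. M"
    using assms(1) by (simp add: product_sigma_finite_def)
  have map: "(\<lambda>x i. T (x i)) \<in> PiM (UNIV::'i set) (\<lambda>_. M) \<rightarrow>\<^sub>M PiM UNIV (\<lambda>_. N)"
    by (rule measurable_PiM_UNIV_map[OF T])
  show ?thesis
  proof (rule D.PiM_eqI[symmetric])
    fix A :: "'i \<Rightarrow> _" assume A: "\<And>i. i \<in> UNIV \<Longrightarrow> A i \<in> sets (distr M N T)"
    then have "Pi\<^sub>E UNIV A \<in> sets (PiM UNIV (\<lambda>_::'i. N))"
      by (intro sets_PiM_I_finite) simp_all
    then have "emeasure (distr (PiM UNIV (\<lambda>_. M)) (PiM UNIV (\<lambda>_. N)) (\<lambda>x i. T (x i))) (Pi\<^sub>E UNIV A)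
        = emeasure (PiM UNIV (\<lambda>_. M)) (Pi\<^sub>E UNIV (\<lambda>i. T -` A i \<inter> space M))"
      using map by (simp add: emeasure_distr) (auto simp: space_PiM PiE_def Pi_def intro!: arg_cong2[where f=emeasure])
    also have "\<dots> = (\<Prod>i\<in>UNIV. emeasure (distr M N T) (A i))"
      using A by (subst M.emeasure_PiM) (auto simp: emeasure_distr)
    finally show "emeasure (distr (PiM UNIV (\<lambda>_. M)) (PiM UNIV (\<lambda>_. N)) (\<lambda>x i. T (x i))) (Pi\<^sub>E UNIV A)
        = (\<Prod>i\<in>UNIV. emeasure (distr M N T) (A i))" .
  qed (auto intro!: sets_PiM_cong)
qed

lemma PiM_UNIV_density:
  assumes "sigma_finite_measure M" "\<And>i. sigma_finite_measure (density M (f i))"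
    and [measurable]: "\<And>i. f i \<in> borel_measurable M"
  shows "PiM (UNIV::'i::finite set) (\<lambda>i. density M (f i))
       = density (PiM UNIV (\<lambda>_. M)) (\<lambda>x. \<Prod>i\<in>UNIV. f i (x i))"
proof -
  interpret D: product_sigma_finite "\<lambda>i::'i. density M (f i)"
    using assms(2) by (simp add: product_sigma_finite_def)
  interpret M: product_sigma_finite "\<lambda>_::'i. M"
    using assms(1) by (simp add: product_sigma_finite_def)
  show ?thesis
  proof (rule D.PiM_eqI[symmetric])
    fix A assume A: "\<And>i. i \<in> UNIV \<Longrightarrow> A i \<in> sets (density M (f i))"
    then have [measurable]: "\<And>i. A i \<in> sets M" by simp
    have "Pi\<^sub>E UNIV A \<in> sets (PiM UNIV (\<lambda>_::'i. M))"
      by (intro sets_PiM_I_finite) simp_all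
    then have "emeasure (density (PiM UNIV (\<lambda>_. M)) (\<lambda>x. \<Prod>i\<in>UNIV. f i (x i))) (Pi\<^sub>E UNIV A)
        = (\<integral>\<^sup>+ x. (\<Prod>i\<in>UNIV. f i (x i) * indicator (A i) (x i)) \<partial>PiM UNIV (\<lambda>_. M))"
      by (auto simp: emeasure_density prod.distrib indicator_def PiE_iff intro!: nn_integral_cong)
    also have "\<dots> = (\<Prod>i\<in>UNIV. emeasure (density M (f i)) (A i))"
      by (subst M.product_nn_integral_prod) (simp_all add: emeasure_density)
    finally show "emeasure (density (PiM UNIV (\<lambda>_. M)) (\<lambda>x. \<Prod>i\<in>UNIV. f i (x i))) (Pi\<^sub>E UNIV A)
        = (\<Prod>i\<in>UNIV. emeasure (density M (f i)) (A i))" .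
  qed (auto intro!: sets_PiM_cong)
qed

lemma nn_integral_PiM_UNIV_distr:
  assumes "sigma_finite_measure M" "sigma_finite_measure (distr M N T)"
    and T: "T \<in> M \<rightarrow>\<^sub>M N" and f: "f \<in> borel_measurable (PiM UNIV (\<lambda>_. N))"
  shows "(\<integral>\<^sup>+ x. f x \<partial>PiM (UNIV::'i::finite set) (\<lambda>_. distr M N T))
       = (\<integral>\<^sup>+ x. f (\<lambda>i. T (x i)) \<partial>PiM UNIV (\<lambda>_. M))"
  unfolding PiM_UNIV_distr[OF assms(1-3)]
  by (rule nn_integral_distr[OF measurable_PiM_UNIV_map[OF T]]) (use f in simp)

lemma nn_integral_PiM_UNIV_density_lborel:
  fixes g :: "'i::finite \<Rightarrow> 'a::euclidean_space \<Rightarrow> real"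
  assumes [measurable]: "\<And>i. g i \<in> borel_measurable borel"
    and f: "f \<in> borel_measurable (PiM UNIV (\<lambda>_. borel))"
  shows "(\<integral>\<^sup>+ x. f x \<partial>PiM UNIV (\<lambda>i. density lborel (\<lambda>z. ennreal (g i z))))
       = (\<integral>\<^sup>+ x. (\<Prod>i\<in>UNIV. ennreal (g i (x i))) * f x \<partial>PiM UNIV (\<lambda>_. lborel))"
  using f by (subst PiM_UNIV_density)
    (auto simp: sigma_finite_measure.sigma_finite_iff_density_finite[OF lborel.sigma_finite_measure_axioms] nn_integral_density
      lborel.sigma_finite_measure_axioms)

lemma sigma_finite_distr_lborel:
  fixes T :: "'a::euclidean_space \<Rightarrow> 'b::euclidean_space"
  assumes [measurable]: "T \<in> borel_measurable borel"
    and coercive: "\<And>z. norm z \<le> a * norm (T z) + c" and "0 \<le> a"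
  shows "sigma_finite_measure (distr lborel borel T)"
proof
  show "\<exists>A. countable A \<and> A \<subseteq> sets (distr lborel borel T) \<and> \<Union> A = space (distr lborel borel T)
          \<and> (\<forall>a\<in>A. emeasure (distr lborel borel T) a \<noteq> \<infinity>)"
  proof (intro exI[of _ "range (\<lambda>n::nat. cball 0 (real n))"] conjI ballI)
    show "\<Union> (range (\<lambda>n::nat. cball 0 (real n))) = space (distr lborel borel T)"
      by (auto simp: real_arch_simple)
    fix B assume "B \<in> range (\<lambda>n::nat. cball (0::'b) (real n))"
    then obtain n :: nat where B: "B = cball 0 (real n)" by auto
    have "T -` B \<subseteq> cball 0 (a * real n + c)"
      using coercive \<open>0 \<le> a\<close> by (force simp: B intro: order_trans mult_left_mono)
    then have "emeasure lborel (T -` B) \<le> emeasure lborel (cball (0::'a) (a * real n + c))"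
      by (rule emeasure_mono) simp
    also have "\<dots> < \<infinity>" by (rule emeasure_lborel_cball_finite)
    finally show "emeasure (distr lborel borel T) B \<noteq> \<infinity>"
      using B by (simp add: emeasure_distr)
  qed auto
qed

lemma norm_sq_affine_isometry:
  fixes L :: "'a::euclidean_space \<Rightarrow> 'b::euclidean_space"
  assumes "linear L" "\<And>z. norm (L z) = norm z"
  shows "(norm (p + L z))\<^sup>2 = ((norm p)\<^sup>2 - (norm (adjoint L p))\<^sup>2) + (norm (z + adjoint L p))\<^sup>2"
proof -
  have "L z \<bullet> p = z \<bullet> adjoint L p"
    using adjoint_works[OF assms(1)] by simp
  moreover have "L z \<bullet> L z = z \<bullet> z"
    using assms(2)[of z] by (metis power2_norm_eq_inner)
  ultimately show ?thesis
    by (simp add: power2_norm_eq_inner inner_add inner_commute)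
qed

lemma infdist_zero_range_eq:
  fixes \<phi> :: "'a::real_normed_vector \<Rightarrow> 'b::real_normed_vector"
  assumes "\<And>z. (norm (\<phi> z))\<^sup>2 = H + (norm (z + b))\<^sup>2"
  shows "infdist 0 (range \<phi>) = norm (\<phi> (-b))"
proof (rule antisym)
  show "infdist 0 (range \<phi>) \<le> norm (\<phi> (-b))"
    using infdist_le[of "\<phi> (-b)" "range \<phi>" 0] by simp
  have "norm (\<phi> (-b)) \<le> norm (\<phi> z)" for z
    using assms[of z] assms[of "-b"] by (simp add: power2_le_imp_le)
  then show "norm (\<phi> (-b)) \<le> infdist 0 (range \<phi>)"
    unfolding infdist_def by (auto intro!: cINF_greatest)
qed

lemma affine_isometry_norm_sq:
  fixes \<phi> :: "'a::euclidean_space \<Rightarrow> 'b::euclidean_space"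
  assumes "affine_isometry \<phi>"
  obtains b where "\<And>z. (norm (\<phi> z))\<^sup>2 = (infdist 0 (range \<phi>))\<^sup>2 + (norm (z + b))\<^sup>2"
proof -
  obtain p L where L: "linear L" "\<And>z. norm (L z) = norm z" and \<phi>_eq: "\<phi> = (\<lambda>z. p + L z)"
    using assms unfolding affine_isometry_def by blast
  define H where "H = (norm p)\<^sup>2 - (norm (adjoint L p))\<^sup>2"
  have H: "(norm (\<phi> z))\<^sup>2 = H + (norm (z + adjoint L p))\<^sup>2" for z
    unfolding \<phi>_eq H_def by (rule norm_sq_affine_isometry[OF L])
  then have "(infdist 0 (range \<phi>))\<^sup>2 = H"
    using H[of "- adjoint L p"] by (simp add: infdist_zero_range_eq)
  with H show ?thesis by (intro that) simp
qed

lemma borel_measurable_affine_isometry: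
  assumes "affine_isometry \<phi>"
  shows "\<phi> \<in> borel_measurable borel"
proof -
  obtain p L where L: "linear L" and \<phi>_eq: "\<phi> = (\<lambda>z. p + L z)"
    using assms unfolding affine_isometry_def by blast
  have [measurable]: "L \<in> borel_measurable borel"
    using L by (intro borel_measurable_continuous_onI linear_continuous_on)
      (simp add: linear_conv_bounded_linear)
  show ?thesis
    unfolding \<phi>_eq by measurable
qed

lemma convex_hull_affine_image:
  assumes "linear L"
  shows "convex hull ((\<lambda>z. p + L z) ` S) = (\<lambda>z. p + L z) ` (convex hull S)"
proof -
  have "convex hull ((\<lambda>z. p + L z) ` S) = convex hull ((\<lambda>x. p + x) ` (L ` S))"
    by (simp add: image_image)
  also have "\<dots> = (\<lambda>x. p + x) ` (L ` (convex hull S))"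
    by (simp add: convex_hull_translation convex_hull_linear_image[OF assms])
  finally show ?thesis
    by (simp add: image_image)
qed

lemma hyperplane_vol_convex_hull_image:
  fixes \<phi> :: "'a::euclidean_space \<Rightarrow> 'b::euclidean_space"
  assumes "affine_isometry \<phi>"
  shows "hyperplane_vol \<phi> (convex hull (\<phi> ` S)) = measure lborel (convex hull S)"
proof -
  obtain p L where L: "linear L" "\<And>z. norm (L z) = norm z" and \<phi>_eq: "\<phi> = (\<lambda>z. p + L z)"
    using assms unfolding affine_isometry_def by blast
  have "inj \<phi>"
  proof (rule injI)
    fix x y assume "\<phi> x = \<phi> y"
    then have "norm (L (x - y)) = 0" by (simp add: \<phi>_eq linear_diff[OF L(1)])
    then show "x = y" by (simp add: L(2))
  qed
  then show ?thesis
    unfolding hyperplane_vol_def \<phi>_eq by (simp add: convex_hull_affine_image[OF L(1)] inj_vimage_image_eq)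
qed

lemma measure_lborel_affine_image:
  fixes t :: "'a::euclidean_space"
  assumes "c \<noteq> 0" and C: "C \<in> sets borel"
  shows "measure lborel ((\<lambda>x. t + c *\<^sub>R x) ` C) = \<bar>c\<bar> ^ DIM('a) * measure lborel C"
proof -
  have "(\<lambda>x. t + c *\<^sub>R x) ` C = (\<lambda>y. (1 / c) *\<^sub>R (y - t)) -` C"
    using \<open>c \<noteq> 0\<close> by (force simp: image_iff)
  also have "\<dots> \<in> sets borel"
  proof -
    have "(\<lambda>y. (1 / c) *\<^sub>R (y - t)) \<in> borel_measurable (borel :: 'a measure)"
      by measurable
    from measurable_sets[OF this C] show ?thesis by simp
  qed
  finally have "emeasure lborel ((\<lambda>x. t + c *\<^sub>R x) ` C)
      = ennreal (\<bar>c\<bar> ^ DIM('a)) * emeasure lborel ((\<lambda>x. t + c *\<^sub>R x) -` (\<lambda>x. t + c *\<^sub>R x) ` C)"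
    by (subst lborel_affine[OF \<open>c \<noteq> 0\<close>, of t]) (simp add: emeasure_density_const emeasure_distr)
  also have "(\<lambda>x. t + c *\<^sub>R x) -` (\<lambda>x. t + c *\<^sub>R x) ` C = C"
    using \<open>c \<noteq> 0\<close> by auto
  finally show ?thesis
    by (simp add: measure_def enn2real_mult)
qed

lemma hyperplane_measure_eq_density_distr:
  fixes \<phi> :: "'a::euclidean_space \<Rightarrow> 'b::euclidean_space"
  assumes [measurable]: "\<phi> \<in> borel_measurable borel" and "c \<noteq> 0"
  shows "hyperplane_measure \<phi>
       = density (distr lborel borel (\<lambda>w. \<phi> (t + c *\<^sub>R w))) (\<lambda>_. ennreal (\<bar>c\<bar> ^ DIM('a)))"
proof -
  have "hyperplane_measure \<phi>
      = distr (density (distr lborel borel (\<lambda>w. t + c *\<^sub>R w)) (\<lambda>_. ennreal (\<bar>c\<bar> ^ DIM('a)))) borel \<phi>"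
    unfolding hyperplane_measure_def using lborel_affine[OF \<open>c \<noteq> 0\<close>, of t] by simp
  also have "\<dots> = distr (distr (density lborel (\<lambda>_. ennreal (\<bar>c\<bar> ^ DIM('a)))) borel (\<lambda>w. t + c *\<^sub>R w)) borel \<phi>"
    by (subst density_distr) simp_all
  also have "\<dots> = distr (density lborel (\<lambda>_. ennreal (\<bar>c\<bar> ^ DIM('a)))) borel (\<lambda>w. \<phi> (t + c *\<^sub>R w))"
    by (subst distr_distr) (simp_all add: comp_def)
  also have "\<dots> = density (distr lborel borel (\<lambda>w. \<phi> (t + c *\<^sub>R w))) (\<lambda>_. ennreal (\<bar>c\<bar> ^ DIM('a)))"
    by (subst density_distr) simp_all
  finally show ?thesis .
qed

lemma nn_integral_PiM_hyperplane_measure: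
  fixes \<phi> :: "'a::euclidean_space \<Rightarrow> 'b::euclidean_space" and f :: "('i::finite \<Rightarrow> 'b) \<Rightarrow> ennreal"
  assumes \<phi>: "affine_isometry \<phi>" and "c \<noteq> 0"
    and f: "f \<in> borel_measurable (PiM UNIV (\<lambda>_. borel))"
  shows "(\<integral>\<^sup>+ x. f x \<partial>PiM UNIV (\<lambda>_. hyperplane_measure \<phi>))
       = (\<integral>\<^sup>+ w. ennreal ((\<bar>c\<bar> ^ DIM('a)) ^ CARD('i)) * f (\<lambda>i. \<phi> (t + c *\<^sub>R w i))
           \<partial>PiM UNIV (\<lambda>_. lborel))"
proof -
  obtain p L where L: "linear L" "\<And>z. norm (L z) = norm z" and \<phi>_eq: "\<phi> = (\<lambda>z. p + L z)"
    using \<phi> unfolding affine_isometry_def by blast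
  define \<psi> where "\<psi> = (\<lambda>w. \<phi> (t + c *\<^sub>R w))"
  define \<kappa> where "\<kappa> = ennreal (\<bar>c\<bar> ^ DIM('a))"
  have \<phi>_measurable[measurable]: "\<phi> \<in> borel_measurable borel"
    using \<phi> by (rule borel_measurable_affine_isometry)
  have [measurable]: "\<psi> \<in> borel_measurable borel"
    unfolding \<psi>_def by measurable
  have hm: "hyperplane_measure \<phi> = density (distr lborel borel \<psi>) (\<lambda>_. \<kappa>)"
    unfolding \<psi>_def \<kappa>_def using \<open>c \<noteq> 0\<close> by (rule hyperplane_measure_eq_density_distr[OF \<phi>_measurable])
  have "sigma_finite_measure (distr lborel borel \<psi>)"
  proof (rule sigma_finite_distr_lborel)
    fix w :: 'a
    have "\<bar>c\<bar> * norm w = norm (\<psi> w - (p + L t))"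
      using L by (simp add: \<psi>_def \<phi>_eq linear_add linear_scale)
    also have "\<dots> \<le> norm (\<psi> w) + norm (p + L t)" by (rule norm_triangle_ineq4)
    finally show "norm w \<le> 1 / \<bar>c\<bar> * norm (\<psi> w) + norm (p + L t) / \<bar>c\<bar>"
      using \<open>c \<noteq> 0\<close> by (simp add: field_simps)
  qed simp_all
  then interpret D: sigma_finite_measure "distr lborel borel \<psi>" .
  have "sigma_finite_measure (density (distr lborel borel \<psi>) (\<lambda>_. \<kappa>))"
    by (simp add: D.sigma_finite_iff_density_finite \<kappa>_def)
  then have "(\<integral>\<^sup>+ x. f x \<partial>PiM UNIV (\<lambda>_. hyperplane_measure \<phi>))
      = (\<integral>\<^sup>+ x. \<kappa> ^ CARD('i) * f x \<partial>PiM UNIV (\<lambda>_. distr lborel borel \<psi>))"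
    unfolding hm using f
    by (subst PiM_UNIV_density[where f="\<lambda>_ _. \<kappa>"]) (auto simp: nn_integral_density D.sigma_finite_measure_axioms)
  also have "\<dots> = (\<integral>\<^sup>+ w. \<kappa> ^ CARD('i) * f (\<lambda>i. \<psi> (w i)) \<partial>PiM UNIV (\<lambda>_. lborel))"
    using f by (intro nn_integral_PiM_UNIV_distr) (auto simp: D.sigma_finite_measure_axioms lborel.sigma_finite_measure_axioms)
  finally show ?thesis
    by (simp add: \<kappa>_def \<psi>_def ennreal_power)
qed

lemma beta_const_pos: "\<beta> > -1 \<Longrightarrow> beta_const m \<beta> > 0"
  unfolding beta_const_def by (simp add: Gamma_real_pos)

lemma beta_dens_nonneg: "\<beta> > -1 \<Longrightarrow> 0 \<le> beta_dens m \<beta> x"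
  using beta_const_pos[of \<beta> m] by (simp add: beta_dens_def)

lemma borel_measurable_beta_dens[measurable]:
  "beta_dens m \<beta> \<in> borel_measurable (borel :: 'a::euclidean_space measure)"
  unfolding beta_dens_def[abs_def] by measurable

lemma beta_dens_slice:
  fixes x :: "'a::real_normed_vector" and w :: "'b::real_normed_vector"
  assumes x: "(norm x)\<^sup>2 = h\<^sup>2 + (1 - h\<^sup>2) * (norm w)\<^sup>2" and "h\<^sup>2 < 1" and "\<beta> > -1"
  shows "beta_dens d \<beta> x = beta_const d \<beta> / beta_const e \<beta> * (1 - h\<^sup>2) powr \<beta> * beta_dens e \<beta> w"
proof -
  have slice: "1 - (norm x)\<^sup>2 = (1 - h\<^sup>2) * (1 - (norm w)\<^sup>2)"
    using x by (simp add: algebra_simps)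
  have "beta_const e \<beta> > 0"
    using \<open>\<beta> > -1\<close> by (rule beta_const_pos)
  moreover have "norm x \<le> 1 \<longleftrightarrow> norm w \<le> 1"
  proof -
    have "norm x \<le> 1 \<longleftrightarrow> 0 \<le> 1 - (norm x)\<^sup>2"
      by (simp add: power_le_one_iff)
    also have "\<dots> \<longleftrightarrow> 0 \<le> 1 - (norm w)\<^sup>2"
      using \<open>h\<^sup>2 < 1\<close> by (simp add: slice zero_le_mult_iff)
    finally show ?thesis
      by (simp add: power_le_one_iff)
  qed
  ultimately show ?thesis
    using slice \<open>h\<^sup>2 < 1\<close> by (auto simp: beta_dens_def powr_mult)
qed

lemma collect_scaling_factors:
  fixes r V k :: real and cd ce \<beta> B :: "'i::finite \<Rightarrow> real"
  assumes "r > 0" "V \<ge> 0" "\<And>i. ce i \<noteq> 0"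
  shows "(r ^ m) ^ CARD('i) * ((r ^ m * V) powr k * (\<Prod>i\<in>UNIV. cd i / ce i * (r\<^sup>2) powr \<beta> i * B i))
       = (\<Prod>i\<in>UNIV. cd i) / (\<Prod>i\<in>UNIV. ce i) * (r\<^sup>2) powr ((\<Sum>i\<in>UNIV. \<beta> i) + real m / 2 * (k + real CARD('i)))
         * ((\<Prod>i\<in>UNIV. B i) * V powr k)"
proof -
  define s where "s = r\<^sup>2"
  have "s > 0" using \<open>r > 0\<close> unfolding s_def by simp
  have rm: "r ^ m = s powr (real m / 2)"
  proof -
    have "s powr (real m / 2) = (r powr 2) powr (real m / 2)"
      using \<open>r > 0\<close> unfolding s_def by (simp add: powr_numeral)
    also have "\<dots> = r powr real m" by (simp add: powr_powr)
    finally show ?thesis using \<open>r > 0\<close> by (simp add: powr_realpow)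
  qed
  have "(r ^ m) ^ CARD('i) = s powr (real m / 2 * real CARD('i))"
    using \<open>s > 0\<close> unfolding rm by (simp add: powr_powr powr_realpow[symmetric])
  moreover have "(r ^ m * V) powr k = s powr (real m / 2 * k) * V powr k"
    using \<open>s > 0\<close> \<open>V \<ge> 0\<close> unfolding rm by (simp add: powr_mult powr_powr)
  moreover have "(\<Prod>i\<in>UNIV. cd i / ce i * s powr \<beta> i * B i)
      = (\<Prod>i\<in>UNIV. cd i) / (\<Prod>i\<in>UNIV. ce i) * s powr (\<Sum>i\<in>UNIV. \<beta> i) * (\<Prod>i\<in>UNIV. B i)"
    using \<open>s > 0\<close> by (simp add: prod.distrib prod_dividef powr_sum)
  moreover have "s powr ((\<Sum>i\<in>UNIV. \<beta> i) + real m / 2 * (k + real CARD('i)))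
      = s powr (real m / 2 * real CARD('i)) * s powr (real m / 2 * k) * s powr (\<Sum>i\<in>UNIV. \<beta> i)"
    unfolding powr_add[symmetric] by (rule arg_cong[where f="(powr) s"]) (simp add: field_simps)
  ultimately show ?thesis
    unfolding s_def[symmetric] by (simp only: mult_ac)
qed

lemma hyperplane_vol_convex_hull_rescale:
  fixes \<phi> :: "'a::euclidean_space \<Rightarrow> 'b::euclidean_space" and w :: "'i::finite \<Rightarrow> 'a"
  assumes \<phi>: "affine_isometry \<phi>" and "c \<noteq> 0"
  shows "hyperplane_vol \<phi> (convex hull (range (\<lambda>i. \<phi> (t + c *\<^sub>R w i))))
       = \<bar>c\<bar> ^ DIM('a) * measure lborel (convex hull (range w))"
proof -
  have "range (\<lambda>i. \<phi> (t + c *\<^sub>R w i)) = \<phi> ` (\<lambda>z. t + c *\<^sub>R z) ` range w"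
    by auto
  then have "hyperplane_vol \<phi> (convex hull (range (\<lambda>i. \<phi> (t + c *\<^sub>R w i))))
      = measure lborel (convex hull ((\<lambda>z. t + c *\<^sub>R z) ` range w))"
    by (simp only: hyperplane_vol_convex_hull_image[OF \<phi>])
  also have "\<dots> = measure lborel ((\<lambda>z. t + c *\<^sub>R z) ` (convex hull (range w)))"
    by (simp only: convex_hull_affine_image[OF linear_scaleR])
  also have "\<dots> = \<bar>c\<bar> ^ DIM('a) * measure lborel (convex hull (range w))"
    using \<open>c \<noteq> 0\<close>
    by (subst measure_lborel_affine_image)
      (simp_all add: borel_compact compact_convex_hull finite_imp_compact)
  finally show ?thesis .
qed

lemma hyperplane_integrand_rescale:
  fixes \<phi> :: "'a::euclidean_space \<Rightarrow> 'b::euclidean_space" and w :: "'i::finite \<Rightarrow> 'a"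
    and \<beta> :: "'i \<Rightarrow> real"
  assumes \<phi>: "affine_isometry \<phi>" and norm_\<phi>: "\<And>z. (norm (\<phi> z))\<^sup>2 = h\<^sup>2 + (norm (z + b))\<^sup>2"
    and "h\<^sup>2 < 1" and \<beta>: "\<And>i. \<beta> i > -1" and r: "r = sqrt (1 - h\<^sup>2)"
  shows "ennreal ((r ^ DIM('a)) ^ CARD('i))
         * ennreal (hyperplane_vol \<phi> (convex hull (range (\<lambda>i. \<phi> (-b + r *\<^sub>R w i)))) powr k
            * (\<Prod>i\<in>UNIV. beta_dens d (\<beta> i) (\<phi> (-b + r *\<^sub>R w i))))
       = ennreal ((\<Prod>i\<in>UNIV. beta_const d (\<beta> i)) / (\<Prod>i\<in>UNIV. beta_const e (\<beta> i))
           * (1 - h\<^sup>2) powr ((\<Sum>i\<in>UNIV. \<beta> i) + real DIM('a) / 2 * (k + real CARD('i))))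
         * ((\<Prod>i\<in>UNIV. ennreal (beta_dens e (\<beta> i) (w i)))
            * ennreal (measure lborel (convex hull (range w)) powr k))"
    (is "ennreal ?J * ennreal ?G = ennreal ?K * (?P * ennreal ?V)")
proof -
  have r2: "r\<^sup>2 = 1 - h\<^sup>2" and "r > 0"
    using \<open>h\<^sup>2 < 1\<close> by (simp_all add: r)
  have vol: "hyperplane_vol \<phi> (convex hull (range (\<lambda>i. \<phi> (-b + r *\<^sub>R w i))))
      = r ^ DIM('a) * measure lborel (convex hull (range w))"
    using hyperplane_vol_convex_hull_rescale[OF \<phi>, where c = r and t = "-b" and w = w] \<open>r > 0\<close>
    by simp
  have dens: "beta_dens d (\<beta> i) (\<phi> (-b + r *\<^sub>R w i))
      = beta_const d (\<beta> i) / beta_const e (\<beta> i) * (r\<^sup>2) powr \<beta> i * beta_dens e (\<beta> i) (w i)" for i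
    unfolding r2 using norm_\<phi>[of "-b + r *\<^sub>R w i"] \<open>h\<^sup>2 < 1\<close> \<beta> \<open>r > 0\<close>
    by (intro beta_dens_slice) (simp_all add: r2 power_mult_distrib)
  have "?J * ?G = ?K * ((\<Prod>i\<in>UNIV. beta_dens e (\<beta> i) (w i)) * ?V)"
    unfolding vol dens r2[symmetric] using \<open>r > 0\<close> beta_const_pos[OF \<beta>, of e]
    by (intro collect_scaling_factors) (simp_all add: less_imp_neq[symmetric])
  moreover have "?P = ennreal (\<Prod>i\<in>UNIV. beta_dens e (\<beta> i) (w i))"
    by (intro prod_ennreal beta_dens_nonneg \<beta>)
  moreover have "0 \<le> (\<Prod>i\<in>UNIV. beta_dens e (\<beta> i) (w i))"
    by (intro prod_nonneg beta_dens_nonneg \<beta>)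
  moreover have "0 \<le> ?K"
    using beta_const_pos[OF \<beta>] by (simp add: less_imp_le prod_nonneg)
  ultimately show ?thesis
    using \<open>r > 0\<close> by (simp add: ennreal_mult'[symmetric] mult.assoc)
qed

lemma nn_integral_hyperplane_beta_simplex_volume:
  fixes \<phi> :: "'a::euclidean_space \<Rightarrow> 'b::euclidean_space" and \<beta> :: "'i::finite \<Rightarrow> real"
  assumes \<phi>: "affine_isometry \<phi>" and h: "h = infdist 0 (range \<phi>)" "h < 1"
    and \<beta>: "\<And>i. \<beta> i > -1"
  shows "(\<integral>\<^sup>+ x. ennreal (hyperplane_vol \<phi> (convex hull (range x)) powr k
              * (\<Prod>i\<in>UNIV. beta_dens d (\<beta> i) (x i))) \<partial>PiM UNIV (\<lambda>_. hyperplane_measure \<phi>))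
       = ennreal ((\<Prod>i\<in>UNIV. beta_const d (\<beta> i)) / (\<Prod>i\<in>UNIV. beta_const e (\<beta> i))
           * (1 - h\<^sup>2) powr ((\<Sum>i\<in>UNIV. \<beta> i) + real DIM('a) / 2 * (k + real CARD('i))))
         * (\<integral>\<^sup>+ y. ennreal (measure lborel (convex hull (range y)) powr k)
            \<partial>PiM UNIV (\<lambda>i. density lborel (\<lambda>z::'a. ennreal (beta_dens e (\<beta> i) z))))"
    (is "?lhs = ?rhs")
proof -
  have "h\<^sup>2 < 1"
    using h infdist_nonneg[of 0 "range \<phi>"] by (simp add: abs_square_less_1)
  obtain b where norm_\<phi>: "\<And>z. (norm (\<phi> z))\<^sup>2 = h\<^sup>2 + (norm (z + b))\<^sup>2"
    using affine_isometry_norm_sq[OF \<phi>] h(1) by metis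
  define r where "r = sqrt (1 - h\<^sup>2)"
  have "r > 0" using \<open>h\<^sup>2 < 1\<close> by (simp add: r_def)
  have [measurable]: "\<phi> \<in> borel_measurable borel"
    using \<phi> by (rule borel_measurable_affine_isometry)
  have "?lhs = (\<integral>\<^sup>+ w. ennreal ((r ^ DIM('a)) ^ CARD('i))
          * ennreal (hyperplane_vol \<phi> (convex hull (range (\<lambda>i. \<phi> (-b + r *\<^sub>R w i)))) powr k
            * (\<Prod>i\<in>UNIV. beta_dens d (\<beta> i) (\<phi> (-b + r *\<^sub>R w i)))) \<partial>PiM UNIV (\<lambda>_. lborel))"
    using \<open>r > 0\<close>
    by (subst nn_integral_PiM_hyperplane_measure[OF \<phi>, where c = r and t = "-b"]; (measurable | simp))
  also have "\<dots> = (\<integral>\<^sup>+ (w::'i \<Rightarrow> 'a).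
         ennreal ((\<Prod>i\<in>UNIV. beta_const d (\<beta> i)) / (\<Prod>i\<in>UNIV. beta_const e (\<beta> i))
           * (1 - h\<^sup>2) powr ((\<Sum>i\<in>UNIV. \<beta> i) + real DIM('a) / 2 * (k + real CARD('i))))
         * ((\<Prod>i\<in>UNIV. ennreal (beta_dens e (\<beta> i) (w i)))
            * ennreal (measure lborel (convex hull (range w)) powr k)) \<partial>PiM UNIV (\<lambda>_. lborel))"
    by (simp only: hyperplane_integrand_rescale[OF \<phi> norm_\<phi> \<open>h\<^sup>2 < 1\<close> \<beta> r_def, where e = e])
  also have "\<dots> = ?rhs"
    by (subst nn_integral_PiM_UNIV_density_lborel) (simp_all add: nn_integral_cmult)
  finally show ?thesis .
qed

theorem lemma3:
  fixes \<phi> :: "real^'m \<Rightarrow> real^'n" and E :: "(real^'n) set"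
    and \<beta> :: "'n \<Rightarrow> real" and k h :: real
  assumes "CARD('n) = CARD('m) + 1" and "CARD('n) \<ge> 2"
    and "\<forall>i. \<beta> i > -1"
    and "affine_isometry \<phi>" and "E = range \<phi>"
    and "h = infdist 0 E" and "0 \<le> h" and "h < 1"
  shows "(\<integral>\<^sup>+ x. ennreal (hyperplane_vol \<phi> (convex hull (range x)) powr k
              * (\<Prod>i\<in>UNIV. beta_dens CARD('n) (\<beta> i) (x i)))
            \<partial>(PiM UNIV (\<lambda>i. hyperplane_measure \<phi>)))
       = ennreal ((\<Prod>i\<in>UNIV. beta_const CARD('n) (\<beta> i)) / (\<Prod>i\<in>UNIV. beta_const (CARD('n) - 1) (\<beta> i))
            * (1 - h\<^sup>2) powr ((\<Sum>i\<in>UNIV. \<beta> i) + (real CARD('n) - 1) / 2 * (k + real CARD('n))))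
         * (\<integral>\<^sup>+ y. ennreal (measure lborel (convex hull (range y)) powr k)
            \<partial>(PiM UNIV (\<lambda>i. density lborel (\<lambda>z::real^'m. ennreal (beta_dens (CARD('n) - 1) (\<beta> i) z)))))"
proof -
  have "real DIM(real^'m) = real CARD('n) - 1"
    using assms(1) by simp
  with nn_integral_hyperplane_beta_simplex_volume[OF assms(4) _ assms(8),
      where \<beta> = \<beta> and k = k and d = "CARD('n)" and e = "CARD('n) - 1"]
  show ?thesis
    using assms(3,5,6) by simp
qed

end
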